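(* Fix a level $1\le l\le L$, a threshold $\eta>0$ and $\alpha\in\{1,2,3\}$. For each $1\le i\le P_l$: - assume $\ker\overline a_{l,i}\cap\ker\overline b^\alpha_{l,i}=\{0\}$; - let $(\lambda_{i,k},p_{i,k})_{k=1}^{n_i}$ be eigenpairs of $(\overline a_{l,i},\overline b^\alpha_{l,i})$ on $\overline V_{h,l,i}$ ($n_i=\dim\overline V_{h,l,i}$), normalized and ordered as described below; - let $m_i=\#\{k:\lambda_{i,k}<\eta\}$ and $\Pi_iw=\sum_{k=1}^{m_i}\overline b^\alpha_{l,i}(w,p_{i,k})\,p_{i,k}$. Assume $V_{h,l-1}\supseteq\operatorname{span}\{e_{l,i}\chi_{l,i}p_{i,k}:1\le i\le P_l,\ k\le m_i\}$. For $v_l\in V_{h,l}$ define $$v_{l,i}=e_{l,i}\chi_{l,i}(I-\Pi_i)r_{l,i}v_l,\qquad v_{l-1}=\sum_{i=1}^{P_l}e_{l,i}\chi_{l,i}\Pi_ir_{l,i}v_l.$$ Then: - $v_l=v_{l-1}+\sum_i v_{l,i}$, with $v_{l-1}\in V_{h,l-1}$ and $v_{l,i}\in V_{h,l,i}$; - for all $i$, $\|v_{l,i}\|_{a_h}^2\le C_1^\alpha\,\overline a_{l,i}(r_{l,i}v_l,r_{l,i}v_l)$, where $$C_1^1=\eta^{-1},\qquad C_1^2=1+\eta^{-1},\qquad C_1^3=2(1+\eta^{-1}).$$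
   Context: Let $\Omega\subset\mathbb R^d$ ($d=2,3$) be a bounded polyhedral domain and $\Gamma_D\subseteq\partial\Omega$. Let $\mathcal T_h$ be a conforming shape-regular mesh of $\Omega$ of open elements. Let $K$ be a symmetric, uniformly positive definite and bounded coefficient. Let $V_h\subset H^1(\Omega)$ be a conforming finite element space on $\mathcal T_h$ with zero trace on $\Gamma_D$. Set $a_\tau(u,v)=\int_\tau(K\nabla u)\cdot\nabla v\,dx$ and $a_h=\sum_{\tau\in\mathcal T_h}a_\tau$ (positive definite on $V_h$), with $\|v\|_{a_h}=\sqrt{a_h(v,v)}$. Decomposition on level $l$: sets $\mathcal T_{h,l,i}\subseteq\mathcal T_h$, $i=1,\dots,P_l$, covering $\mathcal T_h$; $\Omega_{l,i}$ is the interior of $\bigcup_{\tau\in\mathcal T_{h,l,i}}\overline\tau$. Let $V_{h,l-1}\subseteq V_{h,l}\subseteq V_h$ be subspaces. Further: - $\overline V_{h,l,i}=\{v|_{\Omega_{l,i}}:v\in V_{h,l}\}$ and $r_{l,i}v=v|_{\Omega_{l,i}}$; - $V_{h,l,i}=\{v\in V_{h,l}:\operatorname{supp}v\subseteq\overline{\Omega_{l,i}}\}$; - $e_{l,i}$ is extension by zero outside $\Omega_{l,i}$; - $\overline a_{l,i}(u,v)=\sum_{\tau\in\mathcal T_{h,l,i}}a_\tau(u,v)$; - $\mathring{\mathcal T}_{h,l,i}=\{\tau\in\mathcal T_{h,l,i}:\tau\in\mathcal T_{h,l,j}\text{ for some }j\ne i\}$ and $\mathring a_{l,i}(u,v)=\sum_{\tau\in\mathring{\mathcal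 T}_{h,l,i}}a_\tau(u,v)$. Partition of unity: linear maps $\chi_{l,i}:\overline V_{h,l,i}\to\overline V_{h,l,i}$ such that: - $e_{l,i}\chi_{l,i}w\in V_{h,l,i}$ for all $w\in\overline V_{h,l,i}$ (in particular $\chi_{l,i}w$ vanishes on $\partial\Omega_{l,i}\cap\Omega$); - $\sum_{i=1}^{P_l}e_{l,i}\chi_{l,i}r_{l,i}v=v$ for all $v\in V_{h,l}$; - $(\chi_{l,i}w)|_\tau=w|_\tau$ for every $\tau\in\mathcal T_{h,l,i}\setminus\mathring{\mathcal T}_{h,l,i}$. Right-hand side forms on $\overline V_{h,l,i}$: - $\overline b^1_{l,i}(u,v)=\overline a_{l,i}(\chi_{l,i}u,\chi_{l,i}v)$; - $\overline b^2_{l,i}(u,v)=\mathring a_{l,i}(\chi_{l,i}u,\chi_{l,i}v)$; - $\overline b^3_{l,i}(u,v)=\overline a_{l,i}(u-\chi_{l,i}u,v-\chi_{l,i}v)$. Eigenpairs: $(\lambda,p)$ with $p\ne0$ is an eigenpair of $(a,b)$ if either $p\notin\ker b$ and $a(p,v)=\lambda b(p,v)$ for all $v$, or $p\in\ker b$ and $\lambda=+\infty$. Normalization and ordering: eigenvalues are ordered nondecreasingly; the eigenvectors form a pairwise $\overline a_{l,i}$-orthogonal basis; those with finite eigenvalue are $\overline b^\alpha_{l,i}$-orthonormal; those with eigenvalue $+\infty$ lie in $\ker\overline b^\alpha_{l,i}$. *)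

theory Defs
  imports "HOL-Analysis.Analysis" "HOL-Library.Function_Algebras"
begin

definition fscale :: "real \<Rightarrow> ('a \<Rightarrow> real) \<Rightarrow> ('a \<Rightarrow> real)" where
  "fscale c f = (\<lambda>x. c * f x)"

abbreviation fsubspace :: "('a \<Rightarrow> real) set \<Rightarrow> bool" where
  "fsubspace \<equiv> module.subspace fscale"

abbreviation fspan :: "('a \<Rightarrow> real) set \<Rightarrow> ('a \<Rightarrow> real) set" where
  "fspan \<equiv> module.span fscale"

abbreviation fdependent :: "('a \<Rightarrow> real) set \<Rightarrow> bool" where
  "fdependent \<equiv> module.dependent fscale"

abbreviation fdim :: "('a \<Rightarrow> real) set \<Rightarrow> nat" where
  "fdim \<equiv> vector_space.dim fscale"

definition linear_on_set :: "('a \<Rightarrow> real) set \<Rightarrow> (('a \<Rightarrow> real) \<Rightarrow> ('a \<Rightarrow> real)) \<Rightarrow> bool" where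
  "linear_on_set S f \<longleftrightarrow> (\<forall>u\<in>S. \<forall>w\<in>S. f (u + w) = f u + f w) \<and>
                          (\<forall>c. \<forall>u\<in>S. f (fscale c u) = fscale c (f u))"

definition conforming_mesh :: "(real^'d) set set \<Rightarrow> (real^'d) set \<Rightarrow> bool" where
  "conforming_mesh Th \<Omega> \<longleftrightarrow> finite Th \<and> Th \<noteq> {} \<and>
     (\<forall>\<tau>\<in>Th. open \<tau> \<and> \<tau> \<noteq> {} \<and> polytope (closure \<tau>) \<and> \<tau> = interior (closure \<tau>)) \<and>
     (\<forall>\<tau>\<in>Th. \<forall>\<tau>'\<in>Th. \<tau> \<noteq> \<tau>' \<longrightarrow> \<tau> \<inter> \<tau>' = {} \<and>
         (closure \<tau> \<inter> closure \<tau>') face_of closure \<tau> \<and>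
         (closure \<tau> \<inter> closure \<tau>') face_of closure \<tau>') \<and>
     \<Omega> = interior (\<Union>\<tau>\<in>Th. closure \<tau>) \<and> connected \<Omega>"

definition admissible_coeff :: "(real^'d \<Rightarrow> real^'d^'d) \<Rightarrow> (real^'d) set \<Rightarrow> bool" where
  "admissible_coeff K \<Omega> \<longleftrightarrow>
     (\<forall>x\<in>\<Omega>. transpose (K x) = K x) \<and>
     (\<exists>c>0. \<forall>x\<in>\<Omega>. \<forall>\<xi>. c * (norm \<xi>)\<^sup>2 \<le> \<xi> \<bullet> (K x *v \<xi>)) \<and>
     (\<exists>C. \<forall>x\<in>\<Omega>. \<forall>\<xi>. norm (K x *v \<xi>) \<le> C * norm \<xi>)"

definition grad :: "(real^'d \<Rightarrow> real) \<Rightarrow> real^'d \<Rightarrow> real^'d" where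
  "grad f x = (SOME g. (f has_derivative (\<lambda>h. g \<bullet> h)) (at x))"

definition a_elem :: "(real^'d \<Rightarrow> real^'d^'d) \<Rightarrow> (real^'d) set \<Rightarrow>
     (real^'d \<Rightarrow> real) \<Rightarrow> (real^'d \<Rightarrow> real) \<Rightarrow> real" where
  "a_elem K \<tau> u v = integral \<tau> (\<lambda>x. (K x *v grad u x) \<bullet> grad v x)"

text \<open>Sum of element forms over a set of elements (a_h for Th, bar a_{l,i} for T_{h,l,i},
  ring a_{l,i} for the overlap elements).\<close>
definition a_sum :: "(real^'d \<Rightarrow> real^'d^'d) \<Rightarrow> (real^'d) set set \<Rightarrow>
     (real^'d \<Rightarrow> real) \<Rightarrow> (real^'d \<Rightarrow> real) \<Rightarrow> real" where
  "a_sum K Ts u v = (\<Sum>\<tau>\<in>Ts. a_elem K \<tau> u v)"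

text \<open>Representation convention: a function on Omega is stored by its values on the
  open elements (and 0 elsewhere); H^1-conformity of the piecewise smooth
  functions is expressed by a continuous extension to the closure of Omega,
  whose trace vanishes on Gamma_D.\<close>
definition fe_space :: "(real^'d) set set \<Rightarrow> (real^'d) set \<Rightarrow> (real^'d) set \<Rightarrow>
     (real^'d \<Rightarrow> real^'d^'d) \<Rightarrow> (real^'d \<Rightarrow> real) set \<Rightarrow> bool" where
  "fe_space Th \<Omega> \<Gamma>D K V \<longleftrightarrow>
     fsubspace V \<and> (\<exists>B. finite B \<and> fspan B = V) \<and>
     (\<forall>v\<in>V. (\<forall>x. x \<notin> \<Union>Th \<longrightarrow> v x = 0) \<and>
            (\<exists>g. continuous_on (closure \<Omega>) g \<and> (\<forall>x\<in>\<Union>Th. g x = v x) \<and> (\<forall>x\<in>\<Gamma>D. g x = 0)) \<and>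
            (\<forall>\<tau>\<in>Th. \<forall>x\<in>\<tau>. v differentiable (at x))) \<and>
     (\<forall>u\<in>V. \<forall>v\<in>V. \<forall>\<tau>\<in>Th. (\<lambda>x. (K x *v grad u x) \<bullet> grad v x) integrable_on \<tau>)"

definition subdom :: "(real^'d) set set \<Rightarrow> (real^'d) set" where
  "subdom Ts = interior (\<Union>\<tau>\<in>Ts. closure \<tau>)"

definition restr :: "'a set \<Rightarrow> ('a \<Rightarrow> real) \<Rightarrow> ('a \<Rightarrow> real)" where
  "restr U v = (\<lambda>x. if x \<in> U then v x else 0)"

definition ext0 :: "'a set \<Rightarrow> ('a \<Rightarrow> real) \<Rightarrow> ('a \<Rightarrow> real)" where
  "ext0 U w = (\<lambda>x. if x \<in> U then w x else 0)"

definition loc_space :: "('a \<Rightarrow> real) set \<Rightarrow> 'a set \<Rightarrow> ('a \<Rightarrow> real) set" where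
  "loc_space V U = restr U ` V"

definition supp_space :: "('a::topological_space \<Rightarrow> real) set \<Rightarrow> 'a set \<Rightarrow> ('a \<Rightarrow> real) set" where
  "supp_space V U = {v\<in>V. closure {x. v x \<noteq> 0} \<subseteq> closure U}"

definition overlap_elems :: "(nat \<Rightarrow> 'b set) \<Rightarrow> nat \<Rightarrow> nat \<Rightarrow> 'b set" where
  "overlap_elems T P i = {\<tau>\<in>T i. \<exists>j\<in>{1..P}. j \<noteq> i \<and> \<tau> \<in> T j}"

definition b_form :: "nat \<Rightarrow> (real^'d \<Rightarrow> real^'d^'d) \<Rightarrow> (nat \<Rightarrow> (real^'d) set set) \<Rightarrow> nat \<Rightarrow> nat \<Rightarrow>
     ((real^'d \<Rightarrow> real) \<Rightarrow> (real^'d \<Rightarrow> real)) \<Rightarrow> (real^'d \<Rightarrow> real) \<Rightarrow> (real^'d \<Rightarrow> real) \<Rightarrow> real" where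
  "b_form \<alpha> K T P i chi u v =
     (if \<alpha> = 1 then a_sum K (T i) (chi u) (chi v)
      else if \<alpha> = 2 then a_sum K (overlap_elems T P i) (chi u) (chi v)
      else a_sum K (T i) (u - chi u) (v - chi v))"

definition form_ker :: "'f set \<Rightarrow> ('f \<Rightarrow> 'f \<Rightarrow> real) \<Rightarrow> 'f set" where
  "form_ker S b = {p\<in>S. \<forall>v\<in>S. b p v = 0}"

definition eigenpair :: "('a \<Rightarrow> real) set \<Rightarrow> (('a \<Rightarrow> real) \<Rightarrow> ('a \<Rightarrow> real) \<Rightarrow> real) \<Rightarrow>
     (('a \<Rightarrow> real) \<Rightarrow> ('a \<Rightarrow> real) \<Rightarrow> real) \<Rightarrow> ereal \<Rightarrow> ('a \<Rightarrow> real) \<Rightarrow> bool" where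
  "eigenpair S a b lmb p \<longleftrightarrow> p \<in> S \<and> p \<noteq> 0 \<and>
     ((p \<notin> form_ker S b \<and> (\<exists>r. lmb = ereal r \<and> (\<forall>v\<in>S. a p v = r * b p v))) \<or>
      (p \<in> form_ker S b \<and> lmb = \<infinity>))"

definition normalized_eigenbasis :: "('a \<Rightarrow> real) set \<Rightarrow> (('a \<Rightarrow> real) \<Rightarrow> ('a \<Rightarrow> real) \<Rightarrow> real) \<Rightarrow>
     (('a \<Rightarrow> real) \<Rightarrow> ('a \<Rightarrow> real) \<Rightarrow> real) \<Rightarrow> nat \<Rightarrow> (nat \<Rightarrow> ereal) \<Rightarrow> (nat \<Rightarrow> ('a \<Rightarrow> real)) \<Rightarrow> bool" where
  "normalized_eigenbasis S a b n lam p \<longleftrightarrow>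
     n = fdim S \<and> inj_on p {1..n} \<and> \<not> fdependent (p ` {1..n}) \<and> fspan (p ` {1..n}) = S \<and>
     (\<forall>k\<in>{1..n}. eigenpair S a b (lam k) (p k)) \<and>
     (\<forall>j\<in>{1..n}. \<forall>k\<in>{1..n}. j \<noteq> k \<longrightarrow> a (p j) (p k) = 0) \<and>
     (\<forall>j\<in>{1..n}. \<forall>k\<in>{1..n}. lam j \<noteq> \<infinity> \<and> lam k \<noteq> \<infinity> \<longrightarrow>
          b (p j) (p k) = (if j = k then 1 else 0)) \<and>
     (\<forall>k\<in>{1..n}. lam k = \<infinity> \<longrightarrow> p k \<in> form_ker S b) \<and>
     (\<forall>j\<in>{1..n}. \<forall>k\<in>{1..n}. j \<le> k \<longrightarrow> lam j \<le> lam k)"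

definition n_small :: "nat \<Rightarrow> (nat \<Rightarrow> ereal) \<Rightarrow> real \<Rightarrow> nat" where
  "n_small n lam \<eta> = card {k\<in>{1..n}. lam k < ereal \<eta>}"

definition proj_op :: "(('a \<Rightarrow> real) \<Rightarrow> ('a \<Rightarrow> real) \<Rightarrow> real) \<Rightarrow> nat \<Rightarrow> (nat \<Rightarrow> ('a \<Rightarrow> real)) \<Rightarrow>
     ('a \<Rightarrow> real) \<Rightarrow> ('a \<Rightarrow> real)" where
  "proj_op b m p w = (\<Sum>k\<in>{1..m}. fscale (b w (p k)) (p k))"

definition C1 :: "nat \<Rightarrow> real \<Rightarrow> real" where
  "C1 \<alpha> \<eta> = (if \<alpha> = 1 then 1 / \<eta> else if \<alpha> = 2 then 1 + 1 / \<eta> else 2 * (1 + 1 / \<eta>))"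

end

(* Expand the restriction r of v_l to a subdomain in the eigenbasis p_1, ..., p_n of
   (a, b^alpha). The projection Pi keeps exactly the components with eigenvalue below eta,
   so the remainder w = r - Pi r involves only eigenvectors with eigenvalue at least eta
   (possibly infinite). The a-orthogonality and b-orthonormality of the basis give
   a(w,w) <= a(r,r) and eta * b(w,w) <= a(w,w). The energy of chi w, which is the energy of
   the extension by zero, is then bounded according to the choice of b: for alpha = 1 it is
   b(w,w) itself; for alpha = 2, chi is the identity away from the overlap, where it
   contributes at most a(w,w), and b(w,w) is the rest; for alpha = 3 one writes
   chi w = w - (w - chi w). The splitting of v_l is the partition of unity together with the
   linearity of chi, and the coarse part lies in the span of the functions chi p_k. *)

theory Submission
  imports Defs
begin

section \<open>Linear and bilinear maps on function spaces\<close>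

interpretation fvec: vector_space "fscale :: real \<Rightarrow> ('a \<Rightarrow> real) \<Rightarrow> ('a \<Rightarrow> real)"
  by unfold_locales (auto simp: fscale_def fun_eq_iff algebra_simps)

(* the pointwise rules would eta-expand every sum of functions *)
declare plus_fun_apply [simp del] zero_fun_apply [simp del]

lemma fscale_apply: "fscale c f x = c * f x"
  by (simp add: fscale_def)

lemma sum_fun_apply: "sum f A x = (\<Sum>a\<in>A. f a x)"
  by (induction A rule: infinite_finite_induct) (auto simp: plus_fun_apply zero_fun_apply)

lemma linear_on_set_add: "linear_on_set S L \<Longrightarrow> u \<in> S \<Longrightarrow> w \<in> S \<Longrightarrow> L (u + w) = L u + L w"
  unfolding linear_on_set_def by blast

lemma linear_on_set_scale: "linear_on_set S L \<Longrightarrow> u \<in> S \<Longrightarrow> L (fscale c u) = fscale c (L u)"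
  unfolding linear_on_set_def by blast

lemma linear_on_set_sum:
  assumes S: "fsubspace S" and L: "linear_on_set S L"
    and "finite I" and "\<And>k. k \<in> I \<Longrightarrow> x k \<in> S"
  shows "L (\<Sum>k\<in>I. fscale (a k) (x k)) = (\<Sum>k\<in>I. fscale (a k) (L (x k)))"
  using assms(3,4)
proof (induction I rule: finite_induct)
  case empty
  have "L (0 + 0) = L 0 + L 0" by (rule linear_on_set_add[OF L fvec.subspace_0[OF S] fvec.subspace_0[OF S]])
  then show ?case by simp
next
  case (insert k I)
  have "(\<Sum>k\<in>I. fscale (a k) (x k)) \<in> S"
    using insert.prems by (intro fvec.subspace_sum[OF S] fvec.subspace_scale[OF S]) auto
  then show ?case
    using insert by (simp add: linear_on_set_add[OF L] linear_on_set_scale[OF L] fvec.subspace_scale[OF S])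
qed

lemma linear_on_set_id_minus:
  assumes L: "linear_on_set S L"
  shows "linear_on_set S (\<lambda>u. u - L u)"
  unfolding linear_on_set_def
proof (intro conjI ballI allI)
  fix u w assume "u \<in> S" "w \<in> S"
  then show "u + w - L (u + w) = u - L u + (w - L w)"
    by (simp add: linear_on_set_add[OF L])
next
  fix c u assume "u \<in> S"
  then show "fscale c u - L (fscale c u) = fscale c (u - L u)"
    by (simp add: linear_on_set_scale[OF L] fun_eq_iff fscale_apply algebra_simps)
qed

definition sym_bilinear_on :: "('a \<Rightarrow> real) set \<Rightarrow> (('a \<Rightarrow> real) \<Rightarrow> ('a \<Rightarrow> real) \<Rightarrow> real) \<Rightarrow> bool" where
  "sym_bilinear_on S Q \<longleftrightarrow> (\<forall>u\<in>S. \<forall>v\<in>S. \<forall>w\<in>S. Q (u + v) w = Q u w + Q v w) \<and>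
     (\<forall>c. \<forall>u\<in>S. \<forall>w\<in>S. Q (fscale c u) w = c * Q u w) \<and> (\<forall>u\<in>S. \<forall>v\<in>S. Q u v = Q v u)"

definition nonneg_on :: "('a \<Rightarrow> real) set \<Rightarrow> (('a \<Rightarrow> real) \<Rightarrow> ('a \<Rightarrow> real) \<Rightarrow> real) \<Rightarrow> bool" where
  "nonneg_on S Q \<longleftrightarrow> (\<forall>u\<in>S. 0 \<le> Q u u)"

lemma sym_bilinear_on_add_left:
  "sym_bilinear_on S Q \<Longrightarrow> u \<in> S \<Longrightarrow> v \<in> S \<Longrightarrow> w \<in> S \<Longrightarrow> Q (u + v) w = Q u w + Q v w"
  unfolding sym_bilinear_on_def by blast

lemma sym_bilinear_on_scale_left:
  "sym_bilinear_on S Q \<Longrightarrow> u \<in> S \<Longrightarrow> w \<in> S \<Longrightarrow> Q (fscale c u) w = c * Q u w"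
  unfolding sym_bilinear_on_def by blast

lemma sym_bilinear_on_commute:
  "sym_bilinear_on S Q \<Longrightarrow> u \<in> S \<Longrightarrow> v \<in> S \<Longrightarrow> Q u v = Q v u"
  unfolding sym_bilinear_on_def by blast

lemma sym_bilinear_on_diff_left:
  assumes "fsubspace S" "sym_bilinear_on S Q" "u \<in> S" "v \<in> S" "w \<in> S"
  shows "Q (u - v) w = Q u w - Q v w"
  using sym_bilinear_on_add_left[OF assms(2) fvec.subspace_diff[OF assms(1,3,4)] assms(4,5)] by simp

lemma sym_bilinear_on_sum_left:
  assumes S: "fsubspace S" and Q: "sym_bilinear_on S Q"
    and "finite I" and "\<And>k. k \<in> I \<Longrightarrow> x k \<in> S" and y: "y \<in> S"
  shows "Q (\<Sum>k\<in>I. fscale (a k) (x k)) y = (\<Sum>k\<in>I. a k * Q (x k) y)"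
  using assms(3,4)
proof (induction I rule: finite_induct)
  case empty
  show ?case using sym_bilinear_on_scale_left[OF Q y y, of 0] by (simp add: fscale_def zero_fun_def)
next
  case (insert k I)
  have "(\<Sum>k\<in>I. fscale (a k) (x k)) \<in> S"
    using insert.prems by (intro fvec.subspace_sum[OF S] fvec.subspace_scale[OF S]) auto
  then show ?case
    using insert y
    by (simp add: sym_bilinear_on_add_left[OF Q] sym_bilinear_on_scale_left[OF Q] fvec.subspace_scale[OF S])
qed

lemma sym_bilinear_on_orthogonal_sum:
  assumes S: "fsubspace S" and Q: "sym_bilinear_on S Q" and I: "finite I"
    and x: "\<And>k. k \<in> I \<Longrightarrow> x k \<in> S"
    and orth: "\<And>j k. j \<in> I \<Longrightarrow> k \<in> I \<Longrightarrow> j \<noteq> k \<Longrightarrow> Q (x j) (x k) = 0"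
  shows "Q (\<Sum>k\<in>I. fscale (c k) (x k)) (\<Sum>k\<in>I. fscale (c k) (x k)) = (\<Sum>k\<in>I. (c k)\<^sup>2 * Q (x k) (x k))"
proof -
  have sum_in: "(\<Sum>k\<in>I. fscale (c k) (x k)) \<in> S"
    using x by (intro fvec.subspace_sum[OF S] fvec.subspace_scale[OF S])
  have "Q (x j) (\<Sum>k\<in>I. fscale (c k) (x k)) = c j * Q (x j) (x j)" if j: "j \<in> I" for j
  proof -
    have "Q (x j) (\<Sum>k\<in>I. fscale (c k) (x k)) = (\<Sum>k\<in>I. c k * Q (x k) (x j))"
      using sym_bilinear_on_commute[OF Q x[OF j] sum_in] sym_bilinear_on_sum_left[OF S Q I x x[OF j]]
      by simp
    also have "\<dots> = (\<Sum>k\<in>I. if k = j then c j * Q (x j) (x j) else 0)"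
      using orth j by (intro sum.cong) auto
    finally show ?thesis using I j by simp
  qed
  then show ?thesis
    by (simp add: sym_bilinear_on_sum_left[OF S Q I x sum_in] power2_eq_square mult.assoc)
qed

lemma sym_bilinear_on_compose:
  assumes Q: "sym_bilinear_on S Q" and LS: "L ` S \<subseteq> S" and L: "linear_on_set S L"
  shows "sym_bilinear_on S (\<lambda>u v. Q (L u) (L v))"
  unfolding sym_bilinear_on_def
proof (intro conjI ballI allI)
  fix u v w assume "u \<in> S" "v \<in> S" "w \<in> S"
  then show "Q (L (u + v)) (L w) = Q (L u) (L w) + Q (L v) (L w)"
    using LS by (simp add: linear_on_set_add[OF L] sym_bilinear_on_add_left[OF Q] image_subset_iff)
next
  fix c u w assume "u \<in> S" "w \<in> S"
  then show "Q (L (fscale c u)) (L w) = c * Q (L u) (L w)"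
    using LS by (simp add: linear_on_set_scale[OF L] sym_bilinear_on_scale_left[OF Q] image_subset_iff)
next
  fix u v assume "u \<in> S" "v \<in> S"
  then show "Q (L u) (L v) = Q (L v) (L u)"
    using LS sym_bilinear_on_commute[OF Q] by blast
qed

lemma nonneg_on_quadratic_diff_le:
  assumes S: "fsubspace S" and Q: "sym_bilinear_on S Q" and "nonneg_on S Q"
    and x: "x \<in> S" and y: "y \<in> S"
  shows "Q (x - y) (x - y) \<le> 2 * Q x x + 2 * Q y y"
proof -
  have xy: "x + y \<in> S" "x - y \<in> S" using x y by (auto intro: fvec.subspace_add[OF S] fvec.subspace_diff[OF S])
  have yx: "Q y x = Q x y" by (rule sym_bilinear_on_commute[OF Q y x])
  have "Q (x - y) (x - y) = Q x x - 2 * Q x y + Q y y"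
    using sym_bilinear_on_commute[OF Q x xy(2)] sym_bilinear_on_commute[OF Q y xy(2)] yx
    by (simp add: sym_bilinear_on_diff_left[OF S Q] x y xy)
  moreover have "Q (x + y) (x + y) = Q x x + 2 * Q x y + Q y y"
    using sym_bilinear_on_commute[OF Q x xy(1)] sym_bilinear_on_commute[OF Q y xy(1)] yx
    by (simp add: sym_bilinear_on_add_left[OF Q] x y xy)
  moreover have "0 \<le> Q (x + y) (x + y)" using assms(3) xy unfolding nonneg_on_def by blast
  ultimately show ?thesis by linarith
qed

section \<open>Generalized eigenbases\<close>

lemma n_small_le: "n_small n lam \<eta> \<le> n"
proof -
  have "card {k\<in>{1..n}. lam k < ereal \<eta>} \<le> card {1..n}" by (rule card_mono) auto
  then show ?thesis by (simp add: n_small_def)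
qed

lemma n_small_initial_segment:
  fixes lam :: "nat \<Rightarrow> ereal"
  assumes mono: "\<forall>j\<in>{1..n}. \<forall>k\<in>{1..n}. j \<le> k \<longrightarrow> lam j \<le> lam k"
  shows "{k\<in>{1..n}. lam k < ereal \<eta>} = {1..n_small n lam \<eta>}" (is "?F = _")
proof -
  have "?F \<subseteq> {1..card ?F}"
  proof
    fix k assume k: "k \<in> ?F"
    have "{1..k} \<subseteq> ?F"
    proof
      fix j assume j: "j \<in> {1..k}"
      then have "lam j \<le> lam k" using mono k by auto
      then show "j \<in> ?F" using j k by auto
    qed
    then have "card {1..k} \<le> card ?F" by (intro card_mono) auto
    then show "k \<in> {1..card ?F}" using k by auto
  qed
  then show ?thesis unfolding n_small_def by (intro card_subset_eq) auto
qed

lemma normalized_eigenbasis_mem: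
  "normalized_eigenbasis S A B n lam p \<Longrightarrow> k \<in> {1..n} \<Longrightarrow> p k \<in> S"
  unfolding normalized_eigenbasis_def eigenpair_def by blast

context
  fixes S :: "('a \<Rightarrow> real) set" and A B :: "('a \<Rightarrow> real) \<Rightarrow> ('a \<Rightarrow> real) \<Rightarrow> real"
    and n :: nat and lam :: "nat \<Rightarrow> ereal" and p :: "nat \<Rightarrow> 'a \<Rightarrow> real"
  assumes S: "fsubspace S" and B: "sym_bilinear_on S B"
    and eb: "normalized_eigenbasis S A B n lam p"
begin

lemma normalized_eigenbasis_b_diag:
  assumes j: "j \<in> {1..n}" and k: "k \<in> {1..n}"
  shows "B (p j) (p k) = (if j = k \<and> lam k \<noteq> \<infinity> then 1 else 0)"
proof (cases "lam j = \<infinity> \<or> lam k = \<infinity>")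
  case True
  have "B (p j) (p k) = B (p k) (p j)"
    by (rule sym_bilinear_on_commute[OF B normalized_eigenbasis_mem[OF eb j] normalized_eigenbasis_mem[OF eb k]])
  then show ?thesis
    using True eb j k normalized_eigenbasis_mem[OF eb] unfolding normalized_eigenbasis_def form_ker_def by auto
next
  case False
  then show ?thesis using eb j k unfolding normalized_eigenbasis_def by auto
qed

lemma normalized_eigenbasis_a_eigenvalue:
  assumes k: "k \<in> {1..n}" and lk: "lam k = ereal \<rho>"
  shows "A (p k) (p k) = \<rho>"
proof -
  have "eigenpair S A B (lam k) (p k)" using eb k unfolding normalized_eigenbasis_def by blast
  then obtain \<rho>' where "lam k = ereal \<rho>'" "\<forall>v\<in>S. A (p k) v = \<rho>' * B (p k) v"
    using lk unfolding eigenpair_def by auto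
  then show ?thesis
    using lk normalized_eigenbasis_b_diag[OF k k] normalized_eigenbasis_mem[OF eb k] by auto
qed

lemma normalized_eigenbasis_expansion:
  assumes "r \<in> S"
  obtains c where "r = (\<Sum>k\<in>{1..n}. fscale (c k) (p k))"
proof -
  have inj: "inj_on p {1..n}" and "r \<in> fspan (p ` {1..n})"
    using eb assms unfolding normalized_eigenbasis_def by auto
  then obtain u where "r = (\<Sum>v\<in>p ` {1..n}. fscale (u v) v)"
    using fvec.span_finite[of "p ` {1..n}"] by auto
  then have "r = (\<Sum>k\<in>{1..n}. fscale (u (p k)) (p k))"
    using sum.reindex[OF inj, of "\<lambda>v. fscale (u v) v"] by simp
  then show thesis by (rule that)
qed

lemma normalized_eigenbasis_coefficient:
  assumes r: "r = (\<Sum>k\<in>{1..n}. fscale (c k) (p k))" and k: "k \<in> {1..n}" and fin: "lam k \<noteq> \<infinity>"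
  shows "B r (p k) = c k"
proof -
  have "B r (p k) = (\<Sum>j\<in>{1..n}. c j * B (p j) (p k))"
    unfolding r using normalized_eigenbasis_mem[OF eb] k
    by (intro sym_bilinear_on_sum_left[OF S B]) auto
  also have "\<dots> = (\<Sum>j\<in>{1..n}. if j = k then c k else 0)"
    using fin k by (intro sum.cong) (auto simp: normalized_eigenbasis_b_diag)
  finally show ?thesis using k by simp
qed

lemma proj_op_normalized_eigenbasis:
  assumes r: "r = (\<Sum>k\<in>{1..n}. fscale (c k) (p k))"
  shows "proj_op B (n_small n lam \<eta>) p r = (\<Sum>k\<in>{1..n_small n lam \<eta>}. fscale (c k) (p k))"
  unfolding proj_op_def
proof (intro sum.cong refl)
  fix k assume "k \<in> {1..n_small n lam \<eta>}"
  also have "{1..n_small n lam \<eta>} = {k\<in>{1..n}. lam k < ereal \<eta>}"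
    using eb by (intro n_small_initial_segment[symmetric]) (simp add: normalized_eigenbasis_def)
  finally have "k \<in> {1..n}" "lam k \<noteq> \<infinity>" by auto
  then show "fscale (B r (p k)) (p k) = fscale (c k) (p k)"
    by (simp add: normalized_eigenbasis_coefficient[OF r])
qed


lemma proj_op_remainder:
  assumes r: "r = (\<Sum>k\<in>{1..n}. fscale (c k) (p k))"
  shows "r - proj_op B (n_small n lam \<eta>) p r = (\<Sum>k\<in>{n_small n lam \<eta><..n}. fscale (c k) (p k))"
proof -
  let ?m = "n_small n lam \<eta>"
  have split: "{1..n} = {1..?m} \<union> {?m<..n}" "{1..?m} \<inter> {?m<..n} = {}"
    using n_small_le[of n lam \<eta>] by auto
  have "r = (\<Sum>k\<in>{1..?m}. fscale (c k) (p k)) + (\<Sum>k\<in>{?m<..n}. fscale (c k) (p k))"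
    unfolding r split(1) by (rule sum.union_disjoint) (use split(2) in auto)
  moreover have "proj_op B ?m p r = (\<Sum>k\<in>{1..?m}. fscale (c k) (p k))"
    by (rule proj_op_normalized_eigenbasis[OF r])
  ultimately show ?thesis by (metis add_diff_cancel_left')
qed

lemma normalized_eigenbasis_large_eigenvalue:
  assumes "nonneg_on S A" and k: "k \<in> {n_small n lam \<eta><..n}"
  shows "\<eta> * B (p k) (p k) \<le> A (p k) (p k)"
proof -
  have kn: "k \<in> {1..n}" using k by auto
  have "{1..n_small n lam \<eta>} = {k\<in>{1..n}. lam k < ereal \<eta>}"
    using eb by (intro n_small_initial_segment[symmetric]) (simp add: normalized_eigenbasis_def)
  then have large: "\<not> lam k < ereal \<eta>"
    using k kn by (metis (no_types, lifting) atLeastAtMost_iff greaterThanAtMost_iff mem_Collect_eq not_less)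
  show ?thesis
  proof (cases "lam k")
    case (real \<rho>)
    then show ?thesis
      using large normalized_eigenbasis_a_eigenvalue[OF kn real] normalized_eigenbasis_b_diag[OF kn kn] by simp
  next
    case PInf
    then show ?thesis
      using assms(1) normalized_eigenbasis_mem[OF eb kn] normalized_eigenbasis_b_diag[OF kn kn]
      unfolding nonneg_on_def by simp
  next
    case MInf
    then show ?thesis using large by simp
  qed
qed

lemma normalized_eigenbasis_a_sum_diag:
  assumes A: "sym_bilinear_on S A" and I: "I \<subseteq> {1..n}"
  shows "A (\<Sum>k\<in>I. fscale (c k) (p k)) (\<Sum>k\<in>I. fscale (c k) (p k)) = (\<Sum>k\<in>I. (c k)\<^sup>2 * A (p k) (p k))"
proof (rule sym_bilinear_on_orthogonal_sum[OF S A finite_subset[OF I finite_atLeastAtMost]])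
  show "p k \<in> S" if "k \<in> I" for k
    using I that by (intro normalized_eigenbasis_mem[OF eb]) blast
  show "A (p j) (p k) = 0" if "j \<in> I" "k \<in> I" "j \<noteq> k" for j k
    using eb I that unfolding normalized_eigenbasis_def by blast
qed

lemma normalized_eigenbasis_b_sum_diag:
  assumes I: "I \<subseteq> {1..n}"
  shows "B (\<Sum>k\<in>I. fscale (c k) (p k)) (\<Sum>k\<in>I. fscale (c k) (p k)) = (\<Sum>k\<in>I. (c k)\<^sup>2 * B (p k) (p k))"
proof (rule sym_bilinear_on_orthogonal_sum[OF S B finite_subset[OF I finite_atLeastAtMost]])
  show "p k \<in> S" if "k \<in> I" for k
    using I that by (intro normalized_eigenbasis_mem[OF eb]) blast
  show "B (p j) (p k) = 0" if "j \<in> I" "k \<in> I" "j \<noteq> k" for j k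
  proof -
    have "j \<in> {1..n}" "k \<in> {1..n}" using I that(1,2) by blast+
    then show ?thesis using normalized_eigenbasis_b_diag that(3) by simp
  qed
qed

lemma proj_op_mem:
  "proj_op B (n_small n lam \<eta>) p r \<in> S"
  unfolding proj_op_def using n_small_le[of n lam \<eta>] normalized_eigenbasis_mem[OF eb]
  by (intro fvec.subspace_sum[OF S] fvec.subspace_scale[OF S]) auto

lemma proj_op_remainder_bounds:
  fixes \<eta> :: real
  assumes A: "sym_bilinear_on S A" "nonneg_on S A" and r: "r \<in> S"
  defines "w \<equiv> r - proj_op B (n_small n lam \<eta>) p r"
  shows "A w w \<le> A r r" and "\<eta> * B w w \<le> A w w"
proof -
  obtain c where rc: "r = (\<Sum>k\<in>{1..n}. fscale (c k) (p k))"
    using normalized_eigenbasis_expansion[OF r] .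
  let ?I = "{n_small n lam \<eta><..n}"
  have I: "?I \<subseteq> {1..n}" by auto
  have w: "w = (\<Sum>k\<in>?I. fscale (c k) (p k))"
    unfolding w_def by (rule proj_op_remainder[OF rc])
  have "A w w = (\<Sum>k\<in>?I. (c k)\<^sup>2 * A (p k) (p k))"
    unfolding w by (rule normalized_eigenbasis_a_sum_diag[OF A(1) I])
  also have "\<dots> \<le> (\<Sum>k\<in>{1..n}. (c k)\<^sup>2 * A (p k) (p k))"
    using I A(2) normalized_eigenbasis_mem[OF eb] unfolding nonneg_on_def by (intro sum_mono2) auto
  also have "\<dots> = A r r"
    unfolding rc by (rule normalized_eigenbasis_a_sum_diag[OF A(1), symmetric]) simp
  finally show "A w w \<le> A r r" .
  have "\<eta> * B w w = (\<Sum>k\<in>?I. (c k)\<^sup>2 * (\<eta> * B (p k) (p k)))"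
    unfolding w normalized_eigenbasis_b_sum_diag[OF I] by (simp add: sum_distrib_left mult.left_commute)
  also have "\<dots> \<le> (\<Sum>k\<in>?I. (c k)\<^sup>2 * A (p k) (p k))"
    by (intro sum_mono mult_left_mono normalized_eigenbasis_large_eigenvalue[OF A(2)]) auto
  also have "\<dots> = A w w"
    unfolding w by (rule normalized_eigenbasis_a_sum_diag[OF A(1) I, symmetric])
  finally show "\<eta> * B w w \<le> A w w" .
qed

end

section \<open>Gradients and element energies\<close>

lemma grad_eqI:
  assumes "(f has_derivative (\<lambda>h. g \<bullet> h)) (at x)"
  shows "grad f x = g"
proof -
  have "(f has_derivative (\<lambda>h. grad f x \<bullet> h)) (at x)"
    unfolding grad_def using assms by (rule someI)
  from has_derivative_unique[OF this assms]
  have "(grad f x - g) \<bullet> (grad f x - g) = 0"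
    by (metis inner_diff_left right_minus_eq)
  then show ?thesis by simp
qed

lemma has_derivative_grad:
  fixes f :: "real^'d \<Rightarrow> real"
  assumes "f differentiable (at x)"
  shows "(f has_derivative (\<lambda>h. grad f x \<bullet> h)) (at x)"
proof -
  obtain f' where f': "(f has_derivative f') (at x)" using assms differentiable_def by blast
  have "f' = (\<lambda>h. adjoint f' 1 \<bullet> h)"
    using adjoint_works[OF has_derivative_linear[OF f'], of _ 1] by (simp add: fun_eq_iff inner_commute)
  with f' show ?thesis using grad_eqI by metis
qed

lemma grad_cong_open:
  assumes "open U" "x \<in> U" "\<And>y. y \<in> U \<Longrightarrow> f y = g y"
  shows "grad f x = grad g x"
proof -
  have "(f has_derivative D) (at x) \<longleftrightarrow> (g has_derivative D) (at x)" for D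
    using has_derivative_transform_within_open[OF _ assms(1,2), of f D UNIV g]
      has_derivative_transform_within_open[OF _ assms(1,2), of g D UNIV f] assms(3)
    by metis
  then show ?thesis unfolding grad_def by simp
qed

lemma differentiable_cong_open:
  assumes "open U" "x \<in> U" "\<And>y. y \<in> U \<Longrightarrow> f y = g y" "f differentiable (at x)"
  shows "g differentiable (at x)"
  using assms has_derivative_transform_within_open unfolding differentiable_def by metis

lemma grad_add:
  fixes f g :: "real^'d \<Rightarrow> real"
  assumes "f differentiable (at x)" "g differentiable (at x)"
  shows "grad (f + g) x = grad f x + grad g x"
proof -
  have "((\<lambda>y. f y + g y) has_derivative (\<lambda>h. grad f x \<bullet> h + grad g x \<bullet> h)) (at x)"
    by (intro has_derivative_add has_derivative_grad assms)
  then show ?thesis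
    by (intro grad_eqI) (simp add: inner_add_left plus_fun_def)
qed

lemma grad_fscale:
  fixes f :: "real^'d \<Rightarrow> real"
  assumes "f differentiable (at x)"
  shows "grad (fscale c f) x = c *\<^sub>R grad f x"
proof -
  have "((\<lambda>y. c * f y) has_derivative (\<lambda>h. c * (grad f x \<bullet> h))) (at x)"
    by (intro has_derivative_mult_right has_derivative_grad assms)
  then show ?thesis
    by (intro grad_eqI) (simp add: fscale_def)
qed

lemma grad_const_zero: "grad (\<lambda>_. 0::real) x = (0 :: real^'d)"
  by (rule grad_eqI) simp

lemma transpose_eq_inner_commute:
  fixes K :: "real^'d^'d"
  assumes "transpose K = K"
  shows "(K *v a) \<bullet> b = (K *v b) \<bullet> a"
  by (metis assms dot_lmul_matrix inner_commute vector_transpose_matrix)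

definition elem_admissible :: "(real^'d \<Rightarrow> real^'d^'d) \<Rightarrow> (real^'d) set \<Rightarrow> (real^'d \<Rightarrow> real) set \<Rightarrow> bool" where
  "elem_admissible K \<tau> F \<longleftrightarrow> open \<tau> \<and> (\<forall>x\<in>\<tau>. transpose (K x) = K x) \<and> (\<forall>x\<in>\<tau>. \<forall>\<xi>. 0 \<le> \<xi> \<bullet> (K x *v \<xi>)) \<and>
     (\<forall>f\<in>F. \<forall>x\<in>\<tau>. f differentiable (at x)) \<and>
     (\<forall>f\<in>F. \<forall>g\<in>F. (\<lambda>x. (K x *v grad f x) \<bullet> grad g x) integrable_on \<tau>)"

context
  fixes K :: "real^'d \<Rightarrow> real^'d^'d" and \<tau> :: "(real^'d) set" and F :: "(real^'d \<Rightarrow> real) set"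
  assumes adm: "elem_admissible K \<tau> F"
begin

lemma a_elem_add_left:
  assumes "f \<in> F" "g \<in> F" "h \<in> F"
  shows "a_elem K \<tau> (f + g) h = a_elem K \<tau> f h + a_elem K \<tau> g h"
proof -
  have "a_elem K \<tau> (f + g) h = integral \<tau> (\<lambda>x. (K x *v grad f x) \<bullet> grad h x + (K x *v grad g x) \<bullet> grad h x)"
    unfolding a_elem_def using adm assms unfolding elem_admissible_def
    by (intro integral_cong) (simp add: grad_add matrix_vector_right_distrib inner_add_left)
  also have "\<dots> = a_elem K \<tau> f h + a_elem K \<tau> g h"
    unfolding a_elem_def using adm assms unfolding elem_admissible_def by (intro integral_add) auto
  finally show ?thesis .
qed

lemma a_elem_fscale_left:
  assumes "f \<in> F"
  shows "a_elem K \<tau> (fscale c f) h = c * a_elem K \<tau> f h"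
proof -
  have "a_elem K \<tau> (fscale c f) h = integral \<tau> (\<lambda>x. c *\<^sub>R ((K x *v grad f x) \<bullet> grad h x))"
    unfolding a_elem_def using adm assms unfolding elem_admissible_def
    by (intro integral_cong) (simp add: grad_fscale matrix_vector_mult_scaleR)
  then show ?thesis unfolding a_elem_def by simp
qed

lemma a_elem_commute: "a_elem K \<tau> f g = a_elem K \<tau> g f"
  unfolding a_elem_def using adm transpose_eq_inner_commute unfolding elem_admissible_def
  by (intro integral_cong) blast

lemma a_elem_nonneg: "f \<in> F \<Longrightarrow> 0 \<le> a_elem K \<tau> f f"
  unfolding a_elem_def using adm unfolding elem_admissible_def
  by (intro integral_nonneg) (auto simp: inner_commute)

end

lemma a_elem_cong_open:
  assumes "open \<tau>" "\<And>x. x \<in> \<tau> \<Longrightarrow> f x = f' x" "\<And>x. x \<in> \<tau> \<Longrightarrow> g x = g' x"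
  shows "a_elem K \<tau> f g = a_elem K \<tau> f' g'"
  unfolding a_elem_def
  by (rule integral_cong) (simp add: grad_cong_open[OF assms(1) _ assms(2)] grad_cong_open[OF assms(1) _ assms(3)])

lemma a_elem_vanishing_left:
  assumes "open \<tau>" "\<And>x. x \<in> \<tau> \<Longrightarrow> f x = 0"
  shows "a_elem K \<tau> f g = 0"
proof -
  have "a_elem K \<tau> f g = a_elem K \<tau> (\<lambda>_. 0) g" by (rule a_elem_cong_open) (use assms in auto)
  also have "\<dots> = 0" unfolding a_elem_def grad_const_zero by simp
  finally show ?thesis .
qed

lemma a_sum_sym_bilinear_on:
  assumes "\<forall>\<tau>\<in>Ts. elem_admissible K \<tau> S"
  shows "sym_bilinear_on S (a_sum K Ts)"
  unfolding sym_bilinear_on_def a_sum_def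
proof (intro conjI ballI allI)
  fix u v w assume "u \<in> S" "v \<in> S" "w \<in> S"
  then have "a_elem K \<tau> (u + v) w = a_elem K \<tau> u w + a_elem K \<tau> v w" if "\<tau> \<in> Ts" for \<tau>
    using assms that by (intro a_elem_add_left) auto
  then show "(\<Sum>\<tau>\<in>Ts. a_elem K \<tau> (u + v) w) = (\<Sum>\<tau>\<in>Ts. a_elem K \<tau> u w) + (\<Sum>\<tau>\<in>Ts. a_elem K \<tau> v w)"
    by (simp add: sum.distrib)
next
  fix c u w assume "u \<in> S"
  then have "a_elem K \<tau> (fscale c u) w = c * a_elem K \<tau> u w" if "\<tau> \<in> Ts" for \<tau>
    using assms that by (intro a_elem_fscale_left) auto
  then show "(\<Sum>\<tau>\<in>Ts. a_elem K \<tau> (fscale c u) w) = c * (\<Sum>\<tau>\<in>Ts. a_elem K \<tau> u w)"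
    by (simp add: sum_distrib_left)
next
  fix u v
  show "(\<Sum>\<tau>\<in>Ts. a_elem K \<tau> u v) = (\<Sum>\<tau>\<in>Ts. a_elem K \<tau> v u)"
    using assms a_elem_commute by (intro sum.cong) blast+
qed

lemma a_sum_nonneg_on:
  assumes "\<forall>\<tau>\<in>Ts. elem_admissible K \<tau> S"
  shows "nonneg_on S (a_sum K Ts)"
  unfolding nonneg_on_def a_sum_def using assms a_elem_nonneg by (blast intro: sum_nonneg)

lemma a_sum_split:
  assumes "finite Ts" "Ts' \<subseteq> Ts"
  shows "a_sum K Ts f g = a_sum K (Ts - Ts') f g + a_sum K Ts' f g"
  unfolding a_sum_def by (rule sum.subset_diff[OF assms(2,1)])

section \<open>Local spaces on a conforming mesh\<close>

lemma fsubspace_loc_space: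
  assumes V: "fsubspace V"
  shows "fsubspace (loc_space V U)"
  unfolding loc_space_def
proof (rule fvec.subspaceI)
  have "restr U 0 = 0" by (simp add: restr_def fun_eq_iff zero_fun_apply)
  then show "0 \<in> restr U ` V" using fvec.subspace_0[OF V] by (metis image_eqI)
next
  fix x y assume "x \<in> restr U ` V" "y \<in> restr U ` V"
  then obtain v w where "v \<in> V" "w \<in> V" "x = restr U v" "y = restr U w" by blast
  moreover have "restr U v + restr U w = restr U (v + w)"
    by (simp add: restr_def fun_eq_iff plus_fun_apply)
  ultimately show "x + y \<in> restr U ` V" using fvec.subspace_add[OF V] by auto
next
  fix c x assume "x \<in> restr U ` V"
  then obtain v where "v \<in> V" "x = restr U v" by blast
  moreover have "fscale c (restr U v) = restr U (fscale c v)"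
    by (simp add: restr_def fun_eq_iff fscale_apply)
  ultimately show "fscale c x \<in> restr U ` V" using fvec.subspace_scale[OF V] by auto
qed

lemma fe_space_differentiable:
  "fe_space Th \<Omega> \<Gamma>D K V \<Longrightarrow> v \<in> V \<Longrightarrow> \<tau> \<in> Th \<Longrightarrow> x \<in> \<tau> \<Longrightarrow> v differentiable (at x)"
  unfolding fe_space_def by metis

lemma fe_space_integrable:
  "fe_space Th \<Omega> \<Gamma>D K V \<Longrightarrow> u \<in> V \<Longrightarrow> v \<in> V \<Longrightarrow> \<tau> \<in> Th \<Longrightarrow>
    (\<lambda>x. (K x *v grad u x) \<bullet> grad v x) integrable_on \<tau>"
  unfolding fe_space_def by metis

lemma admissible_coeffD:
  assumes "admissible_coeff K \<Omega>" "x \<in> \<Omega>"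
  shows "transpose (K x) = K x" "0 \<le> \<xi> \<bullet> (K x *v \<xi>)"
proof -
  obtain c where c: "c > 0" "\<forall>x\<in>\<Omega>. \<forall>\<xi>. c * (norm \<xi>)\<^sup>2 \<le> \<xi> \<bullet> (K x *v \<xi>)"
    using assms(1) unfolding admissible_coeff_def by blast
  have "0 \<le> c * (norm \<xi>)\<^sup>2" using c(1) by simp
  also have "\<dots> \<le> \<xi> \<bullet> (K x *v \<xi>)" using c(2) assms(2) by blast
  finally show "0 \<le> \<xi> \<bullet> (K x *v \<xi>)" .
  show "transpose (K x) = K x" using assms unfolding admissible_coeff_def by blast
qed

lemma loc_space_agrees:
  assumes "f \<in> loc_space V U" "\<tau> \<subseteq> U"
  shows "\<exists>v\<in>V. \<forall>x\<in>\<tau>. f x = v x"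
proof -
  obtain v where "v \<in> V" "f = restr U v" using assms(1) unfolding loc_space_def by blast
  then show ?thesis using assms(2) by (auto simp: restr_def)
qed

lemma conforming_meshD:
  assumes "conforming_mesh Th \<Omega>"
  shows "finite Th" "\<And>\<tau>. \<tau> \<in> Th \<Longrightarrow> open \<tau>" "\<And>\<tau>. \<tau> \<in> Th \<Longrightarrow> \<tau> = interior (closure \<tau>)"
    "\<And>\<tau> \<sigma>. \<tau> \<in> Th \<Longrightarrow> \<sigma> \<in> Th \<Longrightarrow> \<tau> \<noteq> \<sigma> \<Longrightarrow> \<tau> \<inter> \<sigma> = {}" "\<Omega> = subdom Th"
  using assms unfolding conforming_mesh_def subdom_def by auto

context
  fixes Th :: "(real^'d) set set" and \<Omega> :: "(real^'d) set"
  assumes mesh: "conforming_mesh Th \<Omega>"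
begin

lemma conforming_mesh_elem_subset_subdom:
  assumes "Ts \<subseteq> Th" "\<tau> \<in> Ts"
  shows "\<tau> \<subseteq> subdom Ts"
proof -
  have "\<tau> = interior (closure \<tau>)" using conforming_meshD(3)[OF mesh] assms by blast
  also have "\<dots> \<subseteq> interior (\<Union>\<sigma>\<in>Ts. closure \<sigma>)" using assms by (intro interior_mono) blast
  finally show ?thesis unfolding subdom_def .
qed

lemma conforming_mesh_elem_disjoint_subdom:
  assumes Ts: "Ts \<subseteq> Th" and \<tau>: "\<tau> \<in> Th - Ts"
  shows "\<tau> \<inter> subdom Ts = {}"
proof -
  have "\<tau> \<inter> closure \<sigma> = {}" if "\<sigma> \<in> Ts" for \<sigma>
  proof (rule open_Int_closure_eq_empty[THEN iffD2])
    show "open \<tau>" using \<tau> conforming_meshD(2)[OF mesh] by blast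
    show "\<tau> \<inter> \<sigma> = {}" using conforming_meshD(4)[OF mesh] Ts \<tau> that by blast
  qed
  moreover have "subdom Ts \<subseteq> (\<Union>\<sigma>\<in>Ts. closure \<sigma>)" unfolding subdom_def by (rule interior_subset)
  ultimately show ?thesis by blast
qed

lemma a_sum_ext0_subdom:
  assumes Ts: "Ts \<subseteq> Th"
  shows "a_sum K Th (ext0 (subdom Ts) f) (ext0 (subdom Ts) g) = a_sum K Ts f g"
proof -
  have "a_sum K Th (ext0 (subdom Ts) f) (ext0 (subdom Ts) g)
      = a_sum K (Th - Ts) (ext0 (subdom Ts) f) (ext0 (subdom Ts) g) + a_sum K Ts (ext0 (subdom Ts) f) (ext0 (subdom Ts) g)"
    by (rule a_sum_split[OF conforming_meshD(1)[OF mesh] Ts])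
  also have "a_sum K (Th - Ts) (ext0 (subdom Ts) f) (ext0 (subdom Ts) g) = 0"
    unfolding a_sum_def
  proof (intro sum.neutral ballI a_elem_vanishing_left)
    fix \<tau> x assume \<tau>: "\<tau> \<in> Th - Ts"
    then show "open \<tau>" using conforming_meshD(2)[OF mesh] by blast
    assume "x \<in> \<tau>"
    then show "ext0 (subdom Ts) f x = 0"
      using conforming_mesh_elem_disjoint_subdom[OF Ts \<tau>] by (auto simp: ext0_def)
  qed
  also have "a_sum K Ts (ext0 (subdom Ts) f) (ext0 (subdom Ts) g) = a_sum K Ts f g"
    unfolding a_sum_def
  proof (intro sum.cong refl a_elem_cong_open)
    fix \<tau> x assume \<tau>: "\<tau> \<in> Ts"
    then show "open \<tau>" using Ts conforming_meshD(2)[OF mesh] by blast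
    assume "x \<in> \<tau>"
    then have "x \<in> subdom Ts" using conforming_mesh_elem_subset_subdom[OF Ts \<tau>] by blast
    then show "ext0 (subdom Ts) f x = f x" "ext0 (subdom Ts) g x = g x" by (simp_all add: ext0_def)
  qed
  finally show ?thesis by simp
qed

lemma elem_admissible_loc_space:
  assumes coeff: "admissible_coeff K \<Omega>" and Vh: "fe_space Th \<Omega> \<Gamma>D K Vh" and Vl: "Vl \<subseteq> Vh"
    and Ts: "Ts \<subseteq> Th" and \<tau>: "\<tau> \<in> Ts"
  shows "elem_admissible K \<tau> (loc_space Vl (subdom Ts))"
proof -
  have \<tau>Th: "\<tau> \<in> Th" using Ts \<tau> by blast
  have op: "open \<tau>" by (rule conforming_meshD(2)[OF mesh \<tau>Th])
  have \<tau>U: "\<tau> \<subseteq> subdom Ts" by (rule conforming_mesh_elem_subset_subdom[OF Ts \<tau>])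
  have "\<tau> \<subseteq> subdom Th" by (rule conforming_mesh_elem_subset_subdom[OF order_refl \<tau>Th])
  then have \<tau>\<Omega>: "\<tau> \<subseteq> \<Omega>" using conforming_meshD(5)[OF mesh] by simp
  have diff: "f differentiable (at x)" if f: "f \<in> loc_space Vl (subdom Ts)" and x: "x \<in> \<tau>" for f x
  proof -
    obtain v where "v \<in> Vl" and v: "\<forall>x\<in>\<tau>. f x = v x" using loc_space_agrees[OF f \<tau>U] by blast
    then have "v differentiable (at x)" using fe_space_differentiable[OF Vh _ \<tau>Th x] Vl by blast
    with v show ?thesis using differentiable_cong_open[OF op x, of v f] by simp
  qed
  have int: "(\<lambda>x. (K x *v grad f x) \<bullet> grad g x) integrable_on \<tau>"
    if f: "f \<in> loc_space Vl (subdom Ts)" and g: "g \<in> loc_space Vl (subdom Ts)" for f g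
  proof -
    obtain u where "u \<in> Vl" and u: "\<forall>x\<in>\<tau>. f x = u x" using loc_space_agrees[OF f \<tau>U] by blast
    obtain v where "v \<in> Vl" and v: "\<forall>x\<in>\<tau>. g x = v x" using loc_space_agrees[OF g \<tau>U] by blast
    have "(\<lambda>x. (K x *v grad u x) \<bullet> grad v x) integrable_on \<tau>"
      using fe_space_integrable[OF Vh _ _ \<tau>Th] \<open>u \<in> Vl\<close> \<open>v \<in> Vl\<close> Vl by blast
    then show ?thesis
      by (rule integrable_eq) (simp add: grad_cong_open[OF op _ u[rule_format]] grad_cong_open[OF op _ v[rule_format]])
  qed
  show ?thesis
    unfolding elem_admissible_def using op admissible_coeffD[OF coeff] \<tau>\<Omega> diff int by blast
qed

lemma loc_space_a_sum_forms:
  assumes "admissible_coeff K \<Omega>" "fe_space Th \<Omega> \<Gamma>D K Vh" "Vl \<subseteq> Vh" "Ts \<subseteq> Th" "Ts' \<subseteq> Ts"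
  shows "sym_bilinear_on (loc_space Vl (subdom Ts)) (a_sum K Ts')"
    and "nonneg_on (loc_space Vl (subdom Ts)) (a_sum K Ts')"
  using elem_admissible_loc_space[OF assms(1-4)] assms(5)
  by (blast intro: a_sum_sym_bilinear_on a_sum_nonneg_on)+

end

section \<open>The local components of the decomposition\<close>

lemma b_form_sym_bilinear_on:
  assumes S: "fsubspace S"
    and A: "sym_bilinear_on S (a_sum K (T i))" and Ao: "sym_bilinear_on S (a_sum K (overlap_elems T P i))"
    and chi: "chi ` S \<subseteq> S" "linear_on_set S chi"
  shows "sym_bilinear_on S (b_form \<alpha> K T P i chi)"
proof -
  have "(\<lambda>u. u - chi u) ` S \<subseteq> S" using chi(1) by (auto intro: fvec.subspace_diff[OF S])
  then have "sym_bilinear_on S (\<lambda>u v. a_sum K (T i) (u - chi u) (v - chi v))"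
    using sym_bilinear_on_compose[OF A _ linear_on_set_id_minus[OF chi(2)]] by blast
  moreover have "sym_bilinear_on S (\<lambda>u v. a_sum K (T i) (chi u) (chi v))"
    "sym_bilinear_on S (\<lambda>u v. a_sum K (overlap_elems T P i) (chi u) (chi v))"
    by (rule sym_bilinear_on_compose[OF _ chi], fact)+
  ultimately show ?thesis
    unfolding b_form_def by (cases "\<alpha> = 1"; cases "\<alpha> = 2") (simp_all add: fun_eq_iff)
qed

lemma loc_space_b_form_sym_bilinear_on:
  assumes mesh: "conforming_mesh Th \<Omega>" and coeff: "admissible_coeff K \<Omega>"
    and Vh: "fe_space Th \<Omega> \<Gamma>D K Vh" and Vl: "fsubspace Vl" "Vl \<subseteq> Vh" and Ti: "T i \<subseteq> Th"
    and chi: "chi ` loc_space Vl (subdom (T i)) \<subseteq> loc_space Vl (subdom (T i))"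
      "linear_on_set (loc_space Vl (subdom (T i))) chi"
  shows "sym_bilinear_on (loc_space Vl (subdom (T i))) (b_form \<alpha> K T P i chi)"
proof -
  have "overlap_elems T P i \<subseteq> T i" unfolding overlap_elems_def by blast
  then show ?thesis
    using loc_space_a_sum_forms(1)[OF mesh coeff Vh Vl(2) Ti]
    by (intro b_form_sym_bilinear_on[OF fsubspace_loc_space[OF Vl(1)] _ _ chi]) auto
qed

lemma a_sum_chi_le_C1:
  fixes \<eta> :: real
  assumes S: "fsubspace S" and A: "sym_bilinear_on S (a_sum K (T i))" "nonneg_on S (a_sum K (T i))"
    and Ao: "nonneg_on S (a_sum K (overlap_elems T P i))" and fin: "finite (T i)"
    and chi: "chi ` S \<subseteq> S"
    and chi_id: "\<forall>\<tau>\<in>T i - overlap_elems T P i. open \<tau> \<and> (\<forall>x\<in>\<tau>. chi w x = w x)"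
    and w: "w \<in> S" and \<alpha>: "\<alpha> \<in> {1, 2, 3}" and \<eta>: "\<eta> > 0"
    and Bw: "\<eta> * b_form \<alpha> K T P i chi w w \<le> a_sum K (T i) w w"
    and Aw: "a_sum K (T i) w w \<le> a_sum K (T i) r r"
  shows "a_sum K (T i) (chi w) (chi w) \<le> C1 \<alpha> \<eta> * a_sum K (T i) r r"
proof -
  let ?A = "a_sum K (T i)" and ?Ao = "a_sum K (overlap_elems T P i)"
    and ?An = "a_sum K (T i - overlap_elems T P i)"
  have B_le: "b_form \<alpha> K T P i chi w w \<le> ?A r r / \<eta>"
    using Bw Aw \<eta> by (simp add: field_simps)
  have split: "?A f f = ?An f f + ?Ao f f" for f
    using fin by (rule a_sum_split) (auto simp: overlap_elems_def)
  consider "\<alpha> = 1" | "\<alpha> = 2" | "\<alpha> = 3" using \<alpha> by blast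
  then show ?thesis
  proof cases
    case 1
    then show ?thesis using B_le by (simp add: b_form_def C1_def)
  next
    case 2
    \<comment> \<open>off the overlap \<open>chi\<close> is the identity\<close>
    have "?An (chi w) (chi w) = ?An w w"
      unfolding a_sum_def using chi_id by (intro sum.cong refl a_elem_cong_open) auto
    moreover have "0 \<le> ?Ao w w" using Ao w unfolding nonneg_on_def by blast
    ultimately have "?A (chi w) (chi w) \<le> ?A w w + b_form \<alpha> K T P i chi w w"
      using 2 split[of "chi w"] split[of w] by (simp add: b_form_def)
    then show ?thesis using 2 Aw B_le by (simp add: C1_def algebra_simps)
  next
    case 3
    \<comment> \<open>\<open>chi w = w - (w - chi w)\<close>, and the energy of \<open>w - chi w\<close> is \<open>b\<^sup>3(w, w)\<close>\<close>
    have "?A (w - (w - chi w)) (w - (w - chi w)) \<le> 2 * ?A w w + 2 * ?A (w - chi w) (w - chi w)"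
      using chi w by (intro nonneg_on_quadratic_diff_le[OF S A] fvec.subspace_diff[OF S]) auto
    then show ?thesis using 3 Aw B_le by (simp add: b_form_def C1_def algebra_simps)
  qed
qed

lemma ext0_add: "ext0 U f + ext0 U g = ext0 U (f + g)"
  by (simp add: fun_eq_iff ext0_def plus_fun_apply)

lemma sum_ext0_linear_split:
  assumes S: "\<And>i. i \<in> I \<Longrightarrow> fsubspace (S i)" and chi: "\<And>i. i \<in> I \<Longrightarrow> linear_on_set (S i) (chi i)"
    and q: "\<And>i. i \<in> I \<Longrightarrow> q i \<in> S i" and r: "\<And>i. i \<in> I \<Longrightarrow> r i \<in> S i"
  shows "(\<Sum>i\<in>I. ext0 (U i) (chi i (q i))) + (\<Sum>i\<in>I. ext0 (U i) (chi i (r i - q i)))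
    = (\<Sum>i\<in>I. ext0 (U i) (chi i (r i)))"
  unfolding sum.distrib[symmetric]
proof (rule sum.cong[OF refl])
  fix i assume i: "i \<in> I"
  have "chi i (q i) + chi i (r i - q i) = chi i (r i)"
    using linear_on_set_add[OF chi[OF i] q[OF i] fvec.subspace_diff[OF S[OF i] r[OF i] q[OF i]]] by simp
  then show "ext0 (U i) (chi i (q i)) + ext0 (U i) (chi i (r i - q i)) = ext0 (U i) (chi i (r i))"
    by (simp add: ext0_add)
qed

lemma sum_ext0_chi_proj_op_in_span:
  assumes S: "\<And>i. i \<in> I \<Longrightarrow> fsubspace (S i)" and chi: "\<And>i. i \<in> I \<Longrightarrow> linear_on_set (S i) (chi i)"
    and p: "\<And>i k. i \<in> I \<Longrightarrow> k \<in> {1..m i} \<Longrightarrow> p i k \<in> S i"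
  shows "(\<Sum>i\<in>I. ext0 (U i) (chi i (proj_op (B i) (m i) (p i) (r i))))
    \<in> fspan {ext0 (U i) (chi i (p i k)) | i k. i \<in> I \<and> k \<in> {1..m i}}" (is "_ \<in> fspan ?G")
proof (rule fvec.span_sum)
  fix i assume i: "i \<in> I"
  have "chi i (proj_op (B i) (m i) (p i) (r i)) = (\<Sum>k\<in>{1..m i}. fscale (B i (r i) (p i k)) (chi i (p i k)))"
    unfolding proj_op_def by (rule linear_on_set_sum[OF S[OF i] chi[OF i] finite_atLeastAtMost p[OF i]])
  then have "ext0 (U i) (chi i (proj_op (B i) (m i) (p i) (r i)))
      = (\<Sum>k\<in>{1..m i}. fscale (B i (r i) (p i k)) (ext0 (U i) (chi i (p i k))))"
    by (simp add: fun_eq_iff ext0_def sum_fun_apply fscale_apply)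
  also have "\<dots> \<in> fspan ?G"
    using i by (intro fvec.span_sum fvec.span_scale fvec.span_base) blast
  finally show "ext0 (U i) (chi i (proj_op (B i) (m i) (p i) (r i))) \<in> fspan ?G" .
qed

lemma fine_component_energy:
  fixes \<eta> :: real
  assumes mesh: "conforming_mesh Th \<Omega>" and coeff: "admissible_coeff K \<Omega>"
    and Vh: "fe_space Th \<Omega> \<Gamma>D K Vh" and Vl: "fsubspace Vl" "Vl \<subseteq> Vh" and Ti: "T i \<subseteq> Th"
    and chi: "chi ` loc_space Vl (subdom (T i)) \<subseteq> loc_space Vl (subdom (T i))"
      "linear_on_set (loc_space Vl (subdom (T i))) chi"
    and chi_id: "\<forall>w\<in>loc_space Vl (subdom (T i)). \<forall>\<tau>\<in>T i - overlap_elems T P i. \<forall>x\<in>\<tau>. chi w x = w x"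
    and \<eta>: "\<eta> > 0" and \<alpha>: "\<alpha> \<in> {1, 2, 3}"
    and eig: "normalized_eigenbasis (loc_space Vl (subdom (T i))) (a_sum K (T i)) (b_form \<alpha> K T P i chi) n lam p"
    and r: "r \<in> loc_space Vl (subdom (T i))"
  defines "w \<equiv> r - proj_op (b_form \<alpha> K T P i chi) (n_small n lam \<eta>) p r"
  shows "a_sum K Th (ext0 (subdom (T i)) (chi w)) (ext0 (subdom (T i)) (chi w)) \<le> C1 \<alpha> \<eta> * a_sum K (T i) r r"
proof -
  let ?S = "loc_space Vl (subdom (T i))"
  have S: "fsubspace ?S" by (rule fsubspace_loc_space[OF Vl(1)])
  have ov: "overlap_elems T P i \<subseteq> T i" unfolding overlap_elems_def by blast
  note forms = loc_space_a_sum_forms[OF mesh coeff Vh Vl(2) Ti]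
  have B: "sym_bilinear_on ?S (b_form \<alpha> K T P i chi)"
    by (rule loc_space_b_form_sym_bilinear_on[where T = T and i = i, OF mesh coeff Vh Vl Ti chi])
  have w: "w \<in> ?S"
    unfolding w_def by (rule fvec.subspace_diff[OF S r proj_op_mem[OF S B eig]])
  have bounds: "a_sum K (T i) w w \<le> a_sum K (T i) r r" "\<eta> * b_form \<alpha> K T P i chi w w \<le> a_sum K (T i) w w"
    unfolding w_def by (rule proj_op_remainder_bounds[OF S B eig forms[OF order_refl] r])+
  have "\<forall>\<tau>\<in>T i - overlap_elems T P i. open \<tau> \<and> (\<forall>x\<in>\<tau>. chi w x = w x)"
    using chi_id w conforming_meshD(2)[OF mesh] Ti by blast
  then have "a_sum K (T i) (chi w) (chi w) \<le> C1 \<alpha> \<eta> * a_sum K (T i) r r"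
    by (intro a_sum_chi_le_C1[OF S forms[OF order_refl] forms(2)[OF ov]
          finite_subset[OF Ti conforming_meshD(1)[OF mesh]] chi(1) _ w \<alpha> \<eta> bounds(2,1)])
  then show ?thesis by (simp add: a_sum_ext0_subdom[OF mesh Ti])
qed

theorem lemma3p18:
  fixes Th :: "(real^'d) set set" and \<Omega> \<Gamma>D :: "(real^'d) set"
    and K :: "real^'d \<Rightarrow> real^'d^'d"
    and Vh Vl Vlm1 :: "(real^'d \<Rightarrow> real) set"
    and P :: nat and T :: "nat \<Rightarrow> (real^'d) set set"
    and chi :: "nat \<Rightarrow> (real^'d \<Rightarrow> real) \<Rightarrow> (real^'d \<Rightarrow> real)"
    and \<eta> :: real and \<alpha> :: nat
    and n :: "nat \<Rightarrow> nat" and lam :: "nat \<Rightarrow> nat \<Rightarrow> ereal"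
    and p :: "nat \<Rightarrow> nat \<Rightarrow> (real^'d \<Rightarrow> real)"
    and vl :: "real^'d \<Rightarrow> real"
  assumes dim: "CARD('d) \<in> {2, 3}"
    and mesh: "conforming_mesh Th \<Omega>"
    and GammaD: "\<Gamma>D \<subseteq> frontier \<Omega>"
    and coeff: "admissible_coeff K \<Omega>"
    and Vh: "fe_space Th \<Omega> \<Gamma>D K Vh"
    and ah_pd: "\<forall>v\<in>Vh. v \<noteq> 0 \<longrightarrow> a_sum K Th v v > 0"
    and Vl: "fsubspace Vl" "Vl \<subseteq> Vh"
    and Vlm1: "fsubspace Vlm1" "Vlm1 \<subseteq> Vl"
    and cover: "P \<ge> 1" "\<forall>i\<in>{1..P}. T i \<subseteq> Th" "(\<Union>i\<in>{1..P}. T i) = Th"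
    and chi_lin: "\<forall>i\<in>{1..P}. (\<forall>w\<in>loc_space Vl (subdom (T i)). chi i w \<in> loc_space Vl (subdom (T i)))
                     \<and> linear_on_set (loc_space Vl (subdom (T i))) (chi i)"
    and chi_supp: "\<forall>i\<in>{1..P}. \<forall>w\<in>loc_space Vl (subdom (T i)).
                     ext0 (subdom (T i)) (chi i w) \<in> supp_space Vl (subdom (T i))"
    and chi_pu: "\<forall>v\<in>Vl. (\<Sum>i\<in>{1..P}. ext0 (subdom (T i)) (chi i (restr (subdom (T i)) v))) = v"
    and chi_id: "\<forall>i\<in>{1..P}. \<forall>w\<in>loc_space Vl (subdom (T i)).
                   \<forall>\<tau>\<in>T i - overlap_elems T P i. \<forall>x\<in>\<tau>. chi i w x = w x"
    and eta: "\<eta> > 0"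
    and alpha: "\<alpha> \<in> {1, 2, 3}"
    and kernels: "\<forall>i\<in>{1..P}. form_ker (loc_space Vl (subdom (T i))) (a_sum K (T i))
                     \<inter> form_ker (loc_space Vl (subdom (T i))) (b_form \<alpha> K T P i (chi i)) = {0}"
    and eig: "\<forall>i\<in>{1..P}. normalized_eigenbasis (loc_space Vl (subdom (T i))) (a_sum K (T i))
                     (b_form \<alpha> K T P i (chi i)) (n i) (lam i) (p i)"
    and coarse: "fspan {ext0 (subdom (T i)) (chi i (p i k)) | i k.
                     i \<in> {1..P} \<and> k \<in> {1..n_small (n i) (lam i) \<eta>}} \<subseteq> Vlm1"
    and vl: "vl \<in> Vl"
  shows "let r = (\<lambda>i. restr (subdom (T i)) vl);
             Pi = (\<lambda>i. proj_op (b_form \<alpha> K T P i (chi i)) (n_small (n i) (lam i) \<eta>) (p i));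
             vli = (\<lambda>i. ext0 (subdom (T i)) (chi i (r i - Pi i (r i))));
             vlm1 = (\<Sum>i\<in>{1..P}. ext0 (subdom (T i)) (chi i (Pi i (r i))))
         in vl = vlm1 + (\<Sum>i\<in>{1..P}. vli i) \<and> vlm1 \<in> Vlm1 \<and>
            (\<forall>i\<in>{1..P}. vli i \<in> supp_space Vl (subdom (T i))) \<and>
            (\<forall>i\<in>{1..P}. a_sum K Th (vli i) (vli i) \<le> C1 \<alpha> \<eta> * a_sum K (T i) (r i) (r i))"
proof -
  define S where "S i = loc_space Vl (subdom (T i))" for i
  define r where "r i = restr (subdom (T i)) vl" for i
  define Pi where "Pi i = proj_op (b_form \<alpha> K T P i (chi i)) (n_small (n i) (lam i) \<eta>) (p i)" for i
  define vli where "vli i = ext0 (subdom (T i)) (chi i (r i - Pi i (r i)))" for i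
  define vlm1 where "vlm1 = (\<Sum>i\<in>{1..P}. ext0 (subdom (T i)) (chi i (Pi i (r i))))"
  have S: "fsubspace (S i)" for i unfolding S_def by (rule fsubspace_loc_space[OF Vl(1)])
  have r: "r i \<in> S i" for i unfolding r_def S_def loc_space_def using vl by blast
  have chi: "chi i ` S i \<subseteq> S i" "linear_on_set (S i) (chi i)" if "i \<in> {1..P}" for i
    using chi_lin that unfolding S_def by blast+
  have p: "p i k \<in> S i" if "i \<in> {1..P}" "k \<in> {1..n_small (n i) (lam i) \<eta>}" for i k
    using that n_small_le[of "n i" "lam i" \<eta>] normalized_eigenbasis_mem[OF eig[rule_format, OF that(1)]]
    unfolding S_def by auto
  have Pi: "Pi i (r i) \<in> S i" if i: "i \<in> {1..P}" for i
    using loc_space_b_form_sym_bilinear_on[where T = T and i = i, OF mesh coeff Vh Vl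
        cover(2)[rule_format, OF i] chi[OF i, unfolded S_def]]
    unfolding Pi_def S_def by (rule proj_op_mem[OF fsubspace_loc_space[OF Vl(1)] _ eig[rule_format, OF i]])
  have "vlm1 + (\<Sum>i\<in>{1..P}. vli i) = (\<Sum>i\<in>{1..P}. ext0 (subdom (T i)) (chi i (r i)))"
    unfolding vlm1_def vli_def by (rule sum_ext0_linear_split[OF S chi(2) Pi r])
  also have "\<dots> = vl" unfolding r_def by (rule bspec[OF chi_pu vl])
  finally have "vl = vlm1 + (\<Sum>i\<in>{1..P}. vli i)" ..
  moreover have "vlm1 \<in> Vlm1"
  proof -
    have "vlm1 \<in> fspan {ext0 (subdom (T i)) (chi i (p i k)) | i k.
        i \<in> {1..P} \<and> k \<in> {1..n_small (n i) (lam i) \<eta>}}"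
      unfolding vlm1_def Pi_def
      by (rule sum_ext0_chi_proj_op_in_span[where U = "\<lambda>i. subdom (T i)", OF S chi(2) p])
    then show ?thesis using coarse by blast
  qed
  moreover have "vli i \<in> supp_space Vl (subdom (T i))" if i: "i \<in> {1..P}" for i
    using chi_supp[rule_format, OF i fvec.subspace_diff[OF S r Pi[OF i], unfolded S_def]] unfolding vli_def .
  moreover have "a_sum K Th (vli i) (vli i) \<le> C1 \<alpha> \<eta> * a_sum K (T i) (r i) (r i)" if i: "i \<in> {1..P}" for i
    unfolding vli_def Pi_def
    by (rule fine_component_energy[where T = T and i = i, OF mesh coeff Vh Vl cover(2)[rule_format, OF i]
          chi[OF i, unfolded S_def] bspec[OF chi_id i] eta alpha eig[rule_format, OF i] r[of i, unfolded S_def]])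
  ultimately show ?thesis
    unfolding Let_def r_def[symmetric] Pi_def[symmetric] vli_def[symmetric] vlm1_def[symmetric] by blast
qed

end
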